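(* For $\tau_1,\dots,\tau_{n-1}\in\mathbb{C}$ and $(z_{j,k})_{1\le k<j\le n}$ in a sufficiently small neighbourhood of the origin (principal branches), $$\sum_{\beta\in\Gamma_A}\frac{\prod_{s=1}^{n-1}(\tau_s-\beta_{\underline s})_{\beta_{\overline s}}}{\beta!}z^\beta=\prod_{r=1}^{n-1}\Big(\sum_{s=r}^{n}P_{[r,s]}\Big)^{-\tau_r}.$$
   Context: $(c)_i=c(c+1)\cdots(c+i-1)$. $\Gamma_A=\bigoplus_{1\le j<i\le n}\mathbb{N}\epsilon_{i,j}$; for $\beta\in\Gamma_A$: $\beta_{\underline 1}=0$, $\beta_{\underline i}=\sum_{r=1}^{i-1}\beta_{i,r}$, $\beta_{\overline n}=0$, $\beta_{\overline j}=\sum_{s=j+1}^n\beta_{s,j}$, $\beta!=\prod\beta_{j,k}!$, $z^\beta=\prod z_{j,k}^{\beta_{j,k}}$. Path polynomials: for positive integers $k_1<k_2$, a path is a sequence $k_1=m_0<m_1<\cdots<m_r=k_2$, and $P_{[k_1,k_2]}=\sum_{\text{paths}}(-1)^rz_{m_1,m_0}z_{m_2,m_1}\cdots z_{m_r,m_{r-1}}$; $P_{[k,k]}=1$. *)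

theory Defs
  imports "HOL-Analysis.Analysis"
begin

definition idx_pairs :: "nat \<Rightarrow> (nat \<times> nat) set" where
  "idx_pairs n = {(j,k). 1 \<le> k \<and> k < j \<and> j \<le> n}"

definition Gamma_A :: "nat \<Rightarrow> (nat \<Rightarrow> nat \<Rightarrow> nat) set" where
  "Gamma_A n = {\<beta>. \<forall>j k. \<beta> j k \<noteq> 0 \<longrightarrow> (j,k) \<in> idx_pairs n}"

definition beta_under :: "(nat \<Rightarrow> nat \<Rightarrow> nat) \<Rightarrow> nat \<Rightarrow> nat" where
  "beta_under \<beta> i = (\<Sum>r=1..<i. \<beta> i r)"

definition beta_over :: "nat \<Rightarrow> (nat \<Rightarrow> nat \<Rightarrow> nat) \<Rightarrow> nat \<Rightarrow> nat" where
  "beta_over n \<beta> j = (\<Sum>s=j+1..n. \<beta> s j)"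

definition beta_fact :: "nat \<Rightarrow> (nat \<Rightarrow> nat \<Rightarrow> nat) \<Rightarrow> nat" where
  "beta_fact n \<beta> = (\<Prod>(j,k)\<in>idx_pairs n. fact (\<beta> j k))"

definition z_pow :: "nat \<Rightarrow> (nat \<Rightarrow> nat \<Rightarrow> complex) \<Rightarrow> (nat \<Rightarrow> nat \<Rightarrow> nat) \<Rightarrow> complex" where
  "z_pow n z \<beta> = (\<Prod>(j,k)\<in>idx_pairs n. z j k ^ \<beta> j k)"

definition paths :: "nat \<Rightarrow> nat \<Rightarrow> nat list set" where
  "paths k1 k2 = {ms. ms \<noteq> [] \<and> sorted_wrt (<) ms \<and> hd ms = k1 \<and> last ms = k2}"

definition path_poly :: "(nat \<Rightarrow> nat \<Rightarrow> complex) \<Rightarrow> nat \<Rightarrow> nat \<Rightarrow> complex" where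
  "path_poly z k1 k2 =
     (\<Sum>ms\<in>paths k1 k2. (-1) ^ (length ms - 1) *
        (\<Prod>i<length ms - 1. z (ms ! Suc i) (ms ! i)))"

end

theory Submission
  imports Defs
begin

(* Write L r for the sum of the path polynomials P_[r,s], s = r..n; expanding the first step of
   each path gives L r = 1 - (sum over m > r of z m r * L m). The expansion is proved for the
   series over arrays supported on a finite set S of positions, with z truncated to S, by
   induction on S. Remove the position (m,a) whose column a is minimal. Then the coefficient
   of an array depends on its (m,a)-entry c only through the factor (tau a)_c / c! * z m a ^ c
   and the shift tau a + c, tau m - c of the parameters; by induction the remaining sum is a
   product of powers of the L r, and the sum over c is the binomial series for
   (1 - x) powr (- tau a) with x = z m a * L m / L a, which is exactly the effect of the new
   entry on L a. Interchanging the summations is justified by absolute convergence: every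
   coefficient is dominated by a constant times a product of geometric sequences
   (2^(n+2) * norm (z j k)) ^ beta j k. *)

section \<open>Path polynomials\<close>

lemma strict_sorted_hd_last_bounds:
  fixes xs :: "'a::linorder list"
  assumes "sorted_wrt (<) xs" "x \<in> set xs"
  shows "hd xs \<le> x \<and> x \<le> last xs"
  using assms
proof (induction xs)
  case (Cons y ys)
  show ?case
  proof (cases "ys = []")
    case False
    then have "y < last ys" using Cons.prems(1) by auto
    then show ?thesis using Cons False by (auto intro: less_imp_le)
  qed (use Cons in simp)
qed simp

lemma set_path_subset:
  assumes "ms \<in> paths r s"
  shows "set ms \<subseteq> {r..s}"
  using assms strict_sorted_hd_last_bounds[of ms] by (auto simp: paths_def)

lemma paths_Cons:
  assumes "r < s"
  shows "paths r s = (\<Union>m\<in>{r<..s}. Cons r ` paths m s)"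
proof
  show "paths r s \<subseteq> (\<Union>m\<in>{r<..s}. Cons r ` paths m s)"
  proof
    fix ms assume ms: "ms \<in> paths r s"
    then obtain ms' where ms_eq: "ms = r # ms'"
      unfolding paths_def by (cases ms) auto
    with ms assms have "ms' \<noteq> []" by (auto simp: paths_def)
    with ms ms_eq have "ms' \<in> paths (hd ms') s" "r < hd ms'"
      by (auto simp: paths_def)
    moreover have "hd ms' \<le> s"
      using set_path_subset[OF \<open>ms' \<in> paths (hd ms') s\<close>] hd_in_set[OF \<open>ms' \<noteq> []\<close>] by auto
    ultimately show "ms \<in> (\<Union>m\<in>{r<..s}. Cons r ` paths m s)"
      using ms_eq by auto
  qed
  show "(\<Union>m\<in>{r<..s}. Cons r ` paths m s) \<subseteq> paths r s"
  proof clarify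
    fix m ms assume m: "m \<in> {r<..s}" and ms: "ms \<in> paths m s"
    then have "\<forall>x\<in>set ms. r < x" using set_path_subset[OF ms] by fastforce
    with ms show "r # ms \<in> paths r s" by (auto simp: paths_def)
  qed
qed

lemma finite_paths: "finite (paths r s)"
proof (rule finite_subset)
  show "paths r s \<subseteq> {ms. set ms \<subseteq> {r..s} \<and> length ms \<le> card {r..s}}"
  proof clarify
    fix ms assume ms: "ms \<in> paths r s"
    then have "distinct ms" by (auto simp: paths_def strict_sorted_iff)
    then show "set ms \<subseteq> {r..s} \<and> length ms \<le> card {r..s}"
      using set_path_subset[OF ms] by (metis card_mono distinct_card finite_atLeastAtMost)
  qed
  show "finite {ms. set ms \<subseteq> {r..s} \<and> length ms \<le> card {r..s}}"
    by (rule finite_lists_length_le) simp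
qed

lemma paths_same: "paths r r = {[r]}"
proof -
  have "ms = [r]" if "ms \<in> paths r r" for ms
    using that set_path_subset[OF that] by (cases ms) (auto simp: paths_def subset_singleton_iff)
  then show ?thesis by (auto simp: paths_def)
qed

lemma paths_eq_empty: "s < r \<Longrightarrow> paths r s = {}"
  using set_path_subset by (fastforce simp: paths_def)

lemma path_poly_same: "path_poly z r r = 1"
  by (simp add: path_poly_def paths_same)

lemma path_poly_eq_0: "s < r \<Longrightarrow> path_poly z r s = 0"
  by (simp add: path_poly_def paths_eq_empty)

definition path_weight :: "(nat \<Rightarrow> nat \<Rightarrow> complex) \<Rightarrow> nat list \<Rightarrow> complex" where
  "path_weight z ms = (-1) ^ (length ms - 1) * (\<Prod>i<length ms - 1. z (ms ! Suc i) (ms ! i))"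

lemma path_poly_eq: "path_poly z r s = (\<Sum>ms\<in>paths r s. path_weight z ms)"
  by (simp add: path_poly_def path_weight_def)

lemma path_weight_Cons:
  assumes "ms \<noteq> []"
  shows "path_weight z (r # ms) = - (z (hd ms) r * path_weight z ms)"
proof -
  obtain k where k: "length ms = Suc k" using assms by (cases ms) auto
  have "(\<Prod>i<Suc k. z ((r # ms) ! Suc i) ((r # ms) ! i))
      = z (hd ms) r * (\<Prod>i<k. z (ms ! Suc i) (ms ! i))"
    using assms by (subst prod.lessThan_Suc_shift) (simp add: hd_conv_nth)
  then show ?thesis by (simp add: path_weight_def k)
qed

lemma path_poly_Cons:
  assumes "r < s"
  shows "path_poly z r s = - (\<Sum>m\<in>{r<..s}. z m r * path_poly z m s)"
proof -
  have "path_poly z r s = (\<Sum>m\<in>{r<..s}. \<Sum>ms\<in>Cons r ` paths m s. path_weight z ms)"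
    unfolding path_poly_eq paths_Cons[OF assms]
    by (rule sum.UNION_disjoint) (auto simp: finite_paths, auto simp: paths_def)
  also have "\<dots> = (\<Sum>m\<in>{r<..s}. \<Sum>ms\<in>paths m s. - (z m r * path_weight z ms))"
  proof (rule sum.cong[OF refl])
    fix m
    have "(\<Sum>ms\<in>Cons r ` paths m s. path_weight z ms) = (\<Sum>ms\<in>paths m s. path_weight z (r # ms))"
      by (subst sum.reindex) auto
    also have "\<dots> = (\<Sum>ms\<in>paths m s. - (z m r * path_weight z ms))"
      by (intro sum.cong refl) (auto simp: path_weight_Cons paths_def)
    finally show "(\<Sum>ms\<in>Cons r ` paths m s. path_weight z ms) = \<dots>" .
  qed
  finally show ?thesis
    by (simp add: path_poly_eq sum_distrib_left sum_negf)
qed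

definition path_sum :: "nat \<Rightarrow> (nat \<Rightarrow> nat \<Rightarrow> complex) \<Rightarrow> nat \<Rightarrow> complex" where
  "path_sum n z r = (\<Sum>s=r..n. path_poly z r s)"

lemma path_sum_top: "path_sum n z n = 1"
  by (simp add: path_sum_def path_poly_same)

lemma path_sum_eq_tail:
  assumes "r < m"
  shows "path_sum n z m = (\<Sum>s\<in>{r<..n}. path_poly z m s)"
  unfolding path_sum_def
  by (rule sum.mono_neutral_left) (use assms in \<open>auto simp: path_poly_eq_0\<close>)

lemma path_sum_rec:
  assumes "r < n"
  shows "path_sum n z r = 1 - (\<Sum>m\<in>{r<..n}. z m r * path_sum n z m)"
proof -
  have "{r..n} = insert r {r<..n}" using assms by auto
  then have "path_sum n z r = 1 + (\<Sum>s\<in>{r<..n}. path_poly z r s)"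
    by (simp add: path_sum_def path_poly_same)
  also have "(\<Sum>s\<in>{r<..n}. path_poly z r s)
      = - (\<Sum>s\<in>{r<..n}. \<Sum>m\<in>{r<..n}. z m r * path_poly z m s)"
  proof -
    have "path_poly z r s = - (\<Sum>m\<in>{r<..n}. z m r * path_poly z m s)" if "s \<in> {r<..n}" for s
    proof -
      have "(\<Sum>m\<in>{r<..n}. z m r * path_poly z m s) = (\<Sum>m\<in>{r<..s}. z m r * path_poly z m s)"
        by (rule sum.mono_neutral_right) (use that in \<open>auto simp: path_poly_eq_0\<close>)
      then show ?thesis using that by (simp add: path_poly_Cons)
    qed
    then show ?thesis by (simp add: sum_negf)
  qed
  also have "\<dots> = - (\<Sum>m\<in>{r<..n}. z m r * (\<Sum>s\<in>{r<..n}. path_poly z m s))"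
    by (subst sum.swap) (simp add: sum_distrib_left)
  also have "\<dots> = - (\<Sum>m\<in>{r<..n}. z m r * path_sum n z m)"
    by (intro arg_cong[where f = uminus] sum.cong refl) (simp add: path_sum_eq_tail[of r])
  finally show ?thesis by simp
qed

lemma path_sum_cong:
  assumes "\<And>j k. r \<le> k \<Longrightarrow> k < j \<Longrightarrow> j \<le> n \<Longrightarrow> z j k = z' j k"
  shows "path_sum n z r = path_sum n z' r"
  using assms
proof (induction "n - r" arbitrary: r rule: less_induct)
  case less
  show ?case
  proof (cases "r < n")
    case True
    have "path_sum n z m = path_sum n z' m" if "m \<in> {r<..n}" for m
      using that less.prems by (intro less.hyps) auto
    with True less.prems show ?thesis by (simp add: path_sum_rec)
  next
    case False
    then consider "r = n" | "n < r" by linarith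
    then show ?thesis by cases (simp add: path_sum_top, simp add: path_sum_def)
  qed
qed

section \<open>Arrays supported on a set of positions\<close>

definition Gamma_on :: "(nat \<times> nat) set \<Rightarrow> (nat \<Rightarrow> nat \<Rightarrow> nat) set" where
  "Gamma_on S = {\<beta>. \<forall>j k. \<beta> j k \<noteq> 0 \<longrightarrow> (j,k) \<in> S}"

definition set_entry :: "(nat \<Rightarrow> nat \<Rightarrow> nat) \<Rightarrow> nat \<Rightarrow> nat \<Rightarrow> nat \<Rightarrow> nat \<Rightarrow> nat \<Rightarrow> nat" where
  "set_entry \<beta> m a c j k = (if (j,k) = (m,a) then c else \<beta> j k)"

lemma Gamma_on_empty: "Gamma_on {} = {\<lambda>j k. 0}"
  by (auto simp: Gamma_on_def)

lemma Gamma_on_outside: "\<beta> \<in> Gamma_on S \<Longrightarrow> (j,k) \<notin> S \<Longrightarrow> \<beta> j k = 0"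
  by (auto simp: Gamma_on_def)

lemma bij_betw_set_entry:
  assumes "(m,a) \<notin> S"
  shows "bij_betw (\<lambda>(c,\<beta>). set_entry \<beta> m a c) (UNIV \<times> Gamma_on S) (Gamma_on (insert (m,a) S))"
proof (rule bij_betwI[where g = "\<lambda>\<beta>. (\<beta> m a, set_entry \<beta> m a 0)"])
  show "(\<lambda>(c,\<beta>). set_entry \<beta> m a c) \<in> UNIV \<times> Gamma_on S \<rightarrow> Gamma_on (insert (m,a) S)"
    by (auto simp: Gamma_on_def set_entry_def split: if_splits)
  show "(\<lambda>\<beta>. (\<beta> m a, set_entry \<beta> m a 0)) \<in> Gamma_on (insert (m,a) S) \<rightarrow> UNIV \<times> Gamma_on S"
  proof
    fix \<beta> assume \<beta>: "\<beta> \<in> Gamma_on (insert (m,a) S)"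
    have "(j,k) \<in> S" if "set_entry \<beta> m a 0 j k \<noteq> 0" for j k
    proof -
      from that have "(j,k) \<noteq> (m,a)" "\<beta> j k \<noteq> 0" by (auto simp: set_entry_def split: if_splits)
      with \<beta> show ?thesis unfolding Gamma_on_def by blast
    qed
    then show "(\<beta> m a, set_entry \<beta> m a 0) \<in> UNIV \<times> Gamma_on S"
      by (auto simp: Gamma_on_def)
  qed
  show "(\<lambda>\<beta>. (\<beta> m a, set_entry \<beta> m a 0)) ((\<lambda>(c,\<beta>). set_entry \<beta> m a c) x) = x"
    if x_in: "x \<in> UNIV \<times> Gamma_on S" for x
  proof -
    obtain c \<beta> where x: "x = (c,\<beta>)" "\<beta> \<in> Gamma_on S" using x_in by auto
    with assms have "\<beta> m a = 0" by (simp add: Gamma_on_outside)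
    with x show ?thesis by (auto simp: set_entry_def fun_eq_iff)
  qed
  show "(\<lambda>(c,\<beta>). set_entry \<beta> m a c) ((\<lambda>\<beta>. (\<beta> m a, set_entry \<beta> m a 0)) \<beta>) = \<beta>" for \<beta>
    by (auto simp: set_entry_def fun_eq_iff)
qed

lemma has_sum_Gamma_on_insert:
  fixes F :: "(nat \<Rightarrow> nat \<Rightarrow> nat) \<Rightarrow> 'a::{topological_comm_monoid_add, t3_space}"
  assumes "(m,a) \<notin> S" and "F summable_on Gamma_on (insert (m,a) S)"
    and "\<And>c. ((\<lambda>\<beta>. F (set_entry \<beta> m a c)) has_sum V c) (Gamma_on S)"
    and "(V has_sum W) UNIV"
  shows "(F has_sum W) (Gamma_on (insert (m,a) S))"
proof -
  note bij = bij_betw_set_entry[OF assms(1)]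
  have "(\<lambda>(c,\<beta>). F (set_entry \<beta> m a c)) summable_on UNIV \<times> Gamma_on S"
    using summable_on_reindex_bij_betw[OF bij, of F] assms(2) by (simp add: case_prod_unfold)
  then have "((\<lambda>(c,\<beta>). F (set_entry \<beta> m a c)) has_sum W) (UNIV \<times> Gamma_on S)"
    using assms(3,4) by (intro has_sum_SigmaI[where g = V]) auto
  then show ?thesis
    using has_sum_reindex_bij_betw[OF bij, of F] by (simp add: case_prod_unfold)
qed

lemma prod_set_entry:
  assumes "finite I" "(m,a) \<in> I" "\<beta> m a = 0" "\<And>j k. f j k 0 = 1"
  shows "(\<Prod>(j,k)\<in>I. f j k (set_entry \<beta> m a c j k)) = f m a c * (\<Prod>(j,k)\<in>I. f j k (\<beta> j k))"
proof -
  have "(\<Prod>(j,k)\<in>I - {(m,a)}. f j k (set_entry \<beta> m a c j k)) = (\<Prod>(j,k)\<in>I - {(m,a)}. f j k (\<beta> j k))"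
    by (intro prod.cong) (auto simp: set_entry_def split: if_splits)
  with assms show ?thesis
    by (simp add: prod.remove[OF assms(1,2)] set_entry_def)
qed

section \<open>Absolute convergence\<close>

lemma summable_on_Gamma_on_geometric:
  fixes q :: "nat \<Rightarrow> nat \<Rightarrow> real"
  assumes "finite S" and "\<And>j k. (j,k) \<in> S \<Longrightarrow> 0 \<le> q j k \<and> q j k < 1"
  shows "(\<lambda>\<beta>. \<Prod>(j,k)\<in>S. q j k ^ \<beta> j k) summable_on Gamma_on S"
  using assms
proof (induction S rule: finite_induct)
  case empty
  show ?case by (simp add: Gamma_on_empty)
next
  case (insert p S)
  obtain m a where p: "p = (m,a)" by (cases p)
  define G where "G S' = (\<lambda>\<beta>. \<Prod>(j,k)\<in>S'. q j k ^ \<beta> j k)" for S'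
  define I where "I = infsum (G S) (Gamma_on S)"
  have q: "0 \<le> q m a" "q m a < 1" using insert.prems p by auto
  have G_set_entry: "G (insert p S) (set_entry \<beta> m a c) = q m a ^ c * G S \<beta>" for \<beta> c
  proof -
    have "G S (set_entry \<beta> m a c) = G S \<beta>"
      unfolding G_def using insert.hyps p by (intro prod.cong) (auto simp: set_entry_def)
    then show ?thesis using insert.hyps p by (simp add: G_def set_entry_def)
  qed
  have inner: "((\<lambda>\<beta>. G (insert p S) (set_entry \<beta> m a c)) has_sum q m a ^ c * I) (Gamma_on S)" for c
    unfolding G_set_entry I_def
    by (intro has_sum_cmult_right has_sum_infsum) (use insert in \<open>simp add: G_def\<close>)
  have "(\<lambda>c. q m a ^ c) summable_on UNIV"
    using q by (intro norm_summable_imp_summable_on) (simp add: summable_geometric)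
  then have outer: "(\<lambda>c. q m a ^ c * I) summable_on UNIV"
    by (rule summable_on_cmult_left)
  have "(\<lambda>(c,\<beta>). G (insert p S) (set_entry \<beta> m a c)) summable_on UNIV \<times> Gamma_on S"
    using inner outer insert.prems
    by (intro summable_on_SigmaI[where g = "\<lambda>c. q m a ^ c * I"])
       (auto simp: G_def intro!: prod_nonneg zero_le_power)
  then have "G (insert p S) summable_on Gamma_on (insert p S)"
    using summable_on_reindex_bij_betw[OF bij_betw_set_entry[of m a S], of "G (insert p S)"]
      insert.hyps p by (simp add: case_prod_unfold)
  then show ?case unfolding G_def .
qed

lemma finite_idx_pairs: "finite (idx_pairs n)"
proof (rule finite_subset)
  show "idx_pairs n \<subseteq> {..n} \<times> {..n}" by (auto simp: idx_pairs_def)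
qed simp

lemma idx_pairs_rows: "idx_pairs n = (SIGMA j:{1..n}. {1..<j})"
  by (auto simp: idx_pairs_def)

lemma idx_pairs_cols: "idx_pairs n = (\<lambda>(k,j). (j,k)) ` (SIGMA k:{1..n}. {k<..n})"
  by (auto simp: idx_pairs_def image_iff)

lemma sum_idx_pairs_rows: "(\<Sum>(j,k)\<in>idx_pairs n. f j k) = (\<Sum>j=1..n. \<Sum>k=1..<j. f j k)"
  by (simp add: idx_pairs_rows sum.Sigma)

lemma sum_idx_pairs_cols: "(\<Sum>(j,k)\<in>idx_pairs n. f j k) = (\<Sum>k=1..n. \<Sum>j\<in>{k<..n}. f j k)"
  by (simp add: idx_pairs_cols sum.reindex inj_on_def sum.Sigma case_prod_unfold)

lemma prod_idx_pairs_cols: "(\<Prod>(j,k)\<in>idx_pairs n. f j k) = (\<Prod>k=1..n. \<Prod>j\<in>{k<..n}. f j k)"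
  by (simp add: idx_pairs_cols prod.reindex inj_on_def prod.Sigma case_prod_unfold)

lemma sum_beta_under: "(\<Sum>s=1..n. beta_under \<beta> s) = (\<Sum>(j,k)\<in>idx_pairs n. \<beta> j k)"
  by (simp add: sum_idx_pairs_rows beta_under_def)

lemma sum_beta_over: "(\<Sum>s=1..n. beta_over n \<beta> s) = (\<Sum>(j,k)\<in>idx_pairs n. \<beta> j k)"
  by (simp add: sum_idx_pairs_cols beta_over_def atLeastSucAtMost_greaterThanAtMost)

lemma fact_add_le: "fact (x + y) \<le> 2 ^ (x + y) * fact x * (fact y :: nat)"
proof -
  have "fact (x + y) = fact y * fact x * ((x + y) choose y)"
    using binomial_fact_lemma[of y "x + y"] by simp
  also have "\<dots> \<le> fact y * fact x * 2 ^ (x + y)"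
    by (intro mult_left_mono binomial_le_pow2) simp
  finally show ?thesis by (simp add: algebra_simps)
qed

lemma fact_sum_le:
  assumes "finite J"
  shows "fact (\<Sum>j\<in>J. b j) \<le> 2 ^ (card J * (\<Sum>j\<in>J. b j)) * (\<Prod>j\<in>J. fact (b j) :: nat)"
  using assms
proof (induction J rule: finite_induct)
  case (insert i J)
  define B where "B = (\<Sum>j\<in>J. b j)"
  have "fact (b i + B) \<le> 2 ^ (b i + B) * fact (b i) * (fact B :: nat)"
    by (rule fact_add_le)
  also have "\<dots> \<le> 2 ^ (b i + B) * fact (b i) * (2 ^ (card J * B) * (\<Prod>j\<in>J. fact (b j)))"
    using insert.IH by (simp add: B_def)
  also have "\<dots> = 2 ^ (b i + B + card J * B) * (fact (b i) * (\<Prod>j\<in>J. fact (b j)))"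
    by (simp add: power_add)
  also have "\<dots> \<le> 2 ^ (Suc (card J) * (b i + B)) * (fact (b i) * (\<Prod>j\<in>J. fact (b j)))"
    by (intro mult_right_mono power_increasing) auto
  finally show ?case using insert.hyps by (simp add: B_def)
qed simp

lemma pochhammer_of_nat_Suc_le: "pochhammer (real N + 1) k \<le> fact k * 2 ^ (N + k)"
proof -
  have "fact N * pochhammer (real N + 1) k = (fact (N + k) :: real)"
    by (simp add: pochhammer_fact pochhammer_product' add.commute)
  also have "\<dots> = real (fact k * fact N * ((N + k) choose k))"
    using binomial_fact_lemma[of k "N + k"] by simp
  also have "\<dots> = fact N * (fact k * real ((N + k) choose k))"
    by simp
  finally have "pochhammer (real N + 1) k = fact k * real ((N + k) choose k)"
    by simp
  also have "\<dots> \<le> fact k * 2 ^ (N + k)"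
    using binomial_le_pow2[of "N + k" k] by (intro mult_left_mono) (simp_all flip: of_nat_le_iff)
  finally show ?thesis .
qed

lemma norm_pochhammer_diff_le:
  fixes t :: complex
  assumes "norm t \<le> real N"
  shows "norm (pochhammer (t - of_nat u) k) \<le> fact k * 2 ^ (N + u + k)"
proof -
  have "norm (pochhammer (t - of_nat u) k) \<le> pochhammer (real (N + u) + 1) k"
  proof (induction k)
    case (Suc k)
    have "norm (t - of_nat u + of_nat k) \<le> real (N + u) + 1 + real k"
      using assms norm_triangle_ineq4[of t "of_nat u"]
        norm_triangle_ineq[of "t - of_nat u" "of_nat k"]
      by simp
    then have "norm (pochhammer (t - of_nat u) k) * norm (t - of_nat u + of_nat k)
        \<le> pochhammer (real (N + u) + 1) k * (real (N + u) + 1 + real k)"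
      using Suc.IH by (intro mult_mono) (auto intro: pochhammer_nonneg)
    then show ?case by (simp add: pochhammer_Suc norm_mult)
  qed simp
  also have "\<dots> \<le> fact k * 2 ^ (N + u + k)"
    by (rule pochhammer_of_nat_Suc_le)
  finally show ?thesis .
qed

lemma prod_fact_beta_over_le:
  "(\<Prod>s=1..n. fact (beta_over n \<beta> s)) \<le> 2 ^ (n * (\<Sum>(j,k)\<in>idx_pairs n. \<beta> j k)) * beta_fact n \<beta>"
proof -
  have "fact (beta_over n \<beta> s)
      \<le> 2 ^ (n * beta_over n \<beta> s) * (\<Prod>j\<in>{s<..n}. fact (\<beta> j s) :: nat)" for s
  proof -
    have "fact (beta_over n \<beta> s)
        \<le> 2 ^ (card {s<..n} * beta_over n \<beta> s) * (\<Prod>j\<in>{s<..n}. fact (\<beta> j s) :: nat)"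
      using fact_sum_le[of "{s<..n}" "\<lambda>j. \<beta> j s"]
      by (simp add: beta_over_def atLeastSucAtMost_greaterThanAtMost)
    also have "\<dots> \<le> 2 ^ (n * beta_over n \<beta> s) * (\<Prod>j\<in>{s<..n}. fact (\<beta> j s))"
      by (intro mult_right_mono power_increasing mult_right_mono) auto
    finally show ?thesis .
  qed
  then have "(\<Prod>s=1..n. fact (beta_over n \<beta> s))
      \<le> (\<Prod>s=1..n. 2 ^ (n * beta_over n \<beta> s) * (\<Prod>j\<in>{s<..n}. fact (\<beta> j s)) :: nat)"
    by (intro prod_mono) auto
  also have "\<dots> = 2 ^ (n * (\<Sum>s=1..n. beta_over n \<beta> s)) * beta_fact n \<beta>"
    by (simp add: prod.distrib power_sum sum_distrib_left beta_fact_def prod_idx_pairs_cols)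
  finally show ?thesis by (simp only: sum_beta_over)
qed

definition series_term ::
    "nat \<Rightarrow> (nat \<Rightarrow> complex) \<Rightarrow> (nat \<Rightarrow> nat \<Rightarrow> complex) \<Rightarrow> (nat \<Rightarrow> nat \<Rightarrow> nat) \<Rightarrow> complex" where
  "series_term n \<tau> z \<beta> =
     (\<Prod>s=1..n. pochhammer (\<tau> s - of_nat (beta_under \<beta> s)) (beta_over n \<beta> s))
       / of_nat (beta_fact n \<beta>) * z_pow n z \<beta>"

lemma Gamma_A_eq: "Gamma_A n = Gamma_on (idx_pairs n)"
  by (simp add: Gamma_A_def Gamma_on_def)

lemma beta_fact_pos: "0 < beta_fact n \<beta>"
  by (simp add: beta_fact_def case_prod_unfold prod_pos)

lemma norm_prod_pochhammer_beta_le: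
  fixes \<tau> :: "nat \<Rightarrow> complex"
  assumes "\<And>s. norm (\<tau> s) \<le> real (N s)"
  shows "norm (\<Prod>s=1..n. pochhammer (\<tau> s - of_nat (beta_under \<beta> s)) (beta_over n \<beta> s))
    \<le> 2 ^ (\<Sum>s=1..n. N s) * 2 ^ ((n + 2) * (\<Sum>(j,k)\<in>idx_pairs n. \<beta> j k)) * real (beta_fact n \<beta>)"
proof -
  define B where "B = (\<Sum>(j,k)\<in>idx_pairs n. \<beta> j k)"
  have "norm (\<Prod>s=1..n. pochhammer (\<tau> s - of_nat (beta_under \<beta> s)) (beta_over n \<beta> s))
      \<le> (\<Prod>s=1..n. fact (beta_over n \<beta> s) * 2 ^ (N s + beta_under \<beta> s + beta_over n \<beta> s))"
    unfolding prod_norm[symmetric]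
    by (intro prod_mono conjI norm_ge_zero norm_pochhammer_diff_le assms)
  also have "\<dots> = (\<Prod>s=1..n. fact (beta_over n \<beta> s))
      * 2 ^ (\<Sum>s=1..n. N s + beta_under \<beta> s + beta_over n \<beta> s)"
    by (simp add: prod.distrib flip: power_sum)
  also have "\<dots> = (\<Prod>s=1..n. fact (beta_over n \<beta> s)) * 2 ^ (\<Sum>s=1..n. N s) * 2 ^ (2 * B)"
    unfolding sum.distrib sum_beta_under sum_beta_over B_def by (simp add: power_add mult_2)
  also have "\<dots> \<le> 2 ^ (n * B) * real (beta_fact n \<beta>) * 2 ^ (\<Sum>s=1..n. N s) * 2 ^ (2 * B)"
  proof -
    have "real (\<Prod>s=1..n. fact (beta_over n \<beta> s)) \<le> real (2 ^ (n * B) * beta_fact n \<beta>)"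
      unfolding B_def by (rule of_nat_mono[OF prod_fact_beta_over_le])
    then show ?thesis by (intro mult_right_mono) simp_all
  qed
  finally show ?thesis
    unfolding B_def[symmetric] by (simp add: algebra_simps power_add power_mult power2_eq_square)
qed

lemma norm_series_term_le:
  assumes "\<And>s. norm (\<tau> s) \<le> real (N s)"
  shows "norm (series_term n \<tau> z \<beta>)
    \<le> 2 ^ (\<Sum>s=1..n. N s) * (\<Prod>(j,k)\<in>idx_pairs n. (2 ^ (n + 2) * norm (z j k)) ^ \<beta> j k)"
proof -
  define B where "B = (\<Sum>(j,k)\<in>idx_pairs n. \<beta> j k)"
  define P where "P = (\<Prod>s=1..n. pochhammer (\<tau> s - of_nat (beta_under \<beta> s)) (beta_over n \<beta> s))"
  define Z where "Z = (\<Prod>(j,k)\<in>idx_pairs n. norm (z j k) ^ \<beta> j k)"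
  have P: "norm P / real (beta_fact n \<beta>) \<le> 2 ^ (\<Sum>s=1..n. N s) * 2 ^ ((n + 2) * B)"
    using norm_prod_pochhammer_beta_le[OF assms, where n = n and \<beta> = \<beta>] beta_fact_pos[of n \<beta>]
    by (simp add: P_def B_def pos_divide_le_eq)
  have "norm (series_term n \<tau> z \<beta>) = norm P / real (beta_fact n \<beta>) * Z"
    by (simp add: series_term_def P_def Z_def z_pow_def norm_mult norm_divide norm_power
        case_prod_unfold flip: prod_norm)
  also have "\<dots> \<le> 2 ^ (\<Sum>s=1..n. N s) * 2 ^ ((n + 2) * B) * Z"
    using P by (rule mult_right_mono) (simp add: Z_def case_prod_unfold prod_nonneg)
  also have "\<dots> = 2 ^ (\<Sum>s=1..n. N s) * (\<Prod>(j,k)\<in>idx_pairs n. (2 ^ (n + 2) * norm (z j k)) ^ \<beta> j k)"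
  proof -
    have "(2::real) ^ ((n + 2) * B) = (\<Prod>(j,k)\<in>idx_pairs n. (2 ^ (n + 2)) ^ \<beta> j k)"
      unfolding B_def sum_distrib_left power_sum power_mult by (simp add: case_prod_unfold)
    then show ?thesis
      by (simp add: Z_def power_mult_distrib prod.distrib case_prod_unfold)
  qed
  finally show ?thesis .
qed

lemma summable_on_series_term:
  assumes "\<And>j k. (j,k) \<in> idx_pairs n \<Longrightarrow> norm (z j k) \<le> \<delta>" and "2 ^ (n + 2) * \<delta> < 1"
  shows "series_term n \<tau> z summable_on Gamma_A n"
proof -
  define N where "N s = nat \<lceil>norm (\<tau> s)\<rceil>" for s
  define q where "q j k = 2 ^ (n + 2) * norm (z j k)" for j k
  have "q j k < 1" if "(j,k) \<in> idx_pairs n" for j k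
  proof -
    have "q j k \<le> 2 ^ (n + 2) * \<delta>"
      unfolding q_def by (rule mult_left_mono) (use assms(1)[OF that] in auto)
    with assms(2) show ?thesis by linarith
  qed
  then have "(\<lambda>\<beta>. \<Prod>(j,k)\<in>idx_pairs n. q j k ^ \<beta> j k) summable_on Gamma_A n"
    unfolding Gamma_A_eq
    by (intro summable_on_Gamma_on_geometric finite_idx_pairs) (simp add: q_def)
  then have "(\<lambda>\<beta>. 2 ^ (\<Sum>s=1..n. N s) * (\<Prod>(j,k)\<in>idx_pairs n. q j k ^ \<beta> j k)) summable_on Gamma_A n"
    by (rule summable_on_cmult_right)
  then have "(\<lambda>\<beta>. norm (series_term n \<tau> z \<beta>)) summable_on Gamma_A n"
    by (rule Infinite_Sum.abs_summable_on_comparison_test')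
       (use norm_series_term_le[of \<tau> N] in \<open>simp add: N_def q_def real_nat_ceiling_ge\<close>)
  then show ?thesis
    using summable_on_iff_abs_summable_on_complex by blast
qed

section \<open>Summing out one entry\<close>

lemma set_entry_eq_add:
  "\<beta> m a = 0 \<Longrightarrow> set_entry \<beta> m a c j k = \<beta> j k + (if j = m \<and> k = a then c else 0)"
  by (simp add: set_entry_def)

lemma beta_under_set_entry:
  assumes "1 \<le> a" "a < m" "\<beta> m a = 0"
  shows "beta_under (set_entry \<beta> m a c) s = beta_under \<beta> s + (if s = m then c else 0)"
  using assms by (cases "s = m") (simp_all add: beta_under_def set_entry_eq_add sum.distrib)

lemma beta_over_set_entry:
  assumes "a < m" "m \<le> n" "\<beta> m a = 0"
  shows "beta_over n (set_entry \<beta> m a c) s = beta_over n \<beta> s + (if s = a then c else 0)"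
  using assms by (cases "s = a") (simp_all add: beta_over_def set_entry_eq_add sum.distrib)

lemma beta_fact_set_entry:
  assumes "(m,a) \<in> idx_pairs n" "\<beta> m a = 0"
  shows "beta_fact n (set_entry \<beta> m a c) = fact c * beta_fact n \<beta>"
  using prod_set_entry[where f = "\<lambda>_ _ x. fact x" and c = c and \<beta> = \<beta> and m = m and a = a,
      OF finite_idx_pairs assms]
  by (simp add: beta_fact_def)

lemma z_pow_set_entry:
  assumes "(m,a) \<in> idx_pairs n" "\<beta> m a = 0"
  shows "z_pow n z (set_entry \<beta> m a c) = z m a ^ c * z_pow n z \<beta>"
  using prod_set_entry[where f = "\<lambda>j k x. z j k ^ x" and c = c and \<beta> = \<beta> and m = m and a = a,
      OF finite_idx_pairs assms]
  by (simp add: z_pow_def)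

lemma series_term_set_entry:
  assumes ma: "(m,a) \<in> idx_pairs n" and \<beta>: "\<beta> m a = 0" "beta_under \<beta> a = 0"
  shows "series_term n \<tau> z (set_entry \<beta> m a c)
       = pochhammer (\<tau> a) c / fact c * z m a ^ c
         * series_term n (\<tau>(a := \<tau> a + of_nat c, m := \<tau> m - of_nat c)) z \<beta>"
proof -
  define \<tau>' where "\<tau>' = \<tau>(a := \<tau> a + of_nat c, m := \<tau> m - of_nat c)"
  have am: "1 \<le> a" "a < m" "m \<le> n" using ma by (auto simp: idx_pairs_def)
  note under = beta_under_set_entry[where \<beta> = \<beta>, OF am(1,2) \<beta>(1)]
    and over = beta_over_set_entry[where \<beta> = \<beta>, OF am(2,3) \<beta>(1)]
  let ?P = "\<lambda>s. pochhammer (\<tau> s - of_nat (beta_under (set_entry \<beta> m a c) s))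
                  (beta_over n (set_entry \<beta> m a c) s)"
  let ?Q = "\<lambda>s. pochhammer (\<tau>' s - of_nat (beta_under \<beta> s)) (beta_over n \<beta> s)"
  have "?P a = pochhammer (\<tau> a) (c + beta_over n \<beta> a)"
    using am \<beta> by (simp add: under over add.commute)
  also have "\<dots> = pochhammer (\<tau> a) c * ?Q a"
    using am \<beta> by (simp add: pochhammer_product' \<tau>'_def)
  finally have Pa: "?P a = pochhammer (\<tau> a) c * ?Q a" .
  have "?P s = ?Q s" if "s \<noteq> a" for s
    using that by (simp add: under over \<tau>'_def algebra_simps)
  then have rest: "(\<Prod>s\<in>{1..n} - {a}. ?P s) = (\<Prod>s\<in>{1..n} - {a}. ?Q s)"
    by (intro prod.cong) auto
  have remove_a: "prod f {1..n} = f a * prod f ({1..n} - {a})" for f :: "nat \<Rightarrow> complex"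
    using am by (intro prod.remove) auto
  have "(\<Prod>s=1..n. ?P s) = pochhammer (\<tau> a) c * (\<Prod>s=1..n. ?Q s)"
    unfolding remove_a[of ?P] remove_a[of ?Q] Pa rest by (simp only: mult.assoc)
  then show ?thesis
    unfolding series_term_def \<tau>'_def[symmetric]
    by (simp add: beta_fact_set_entry[where \<beta> = \<beta>, OF ma \<beta>(1)]
        z_pow_set_entry[where \<beta> = \<beta>, OF ma \<beta>(1)] field_simps)
qed

lemma powr_mult_Re_pos:
  fixes w u a :: complex
  assumes "0 < Re w" "0 < Re u"
  shows "(w * u) powr a = w powr a * u powr a"
proof -
  have "\<bar>Im (Ln w)\<bar> < pi / 2" "\<bar>Im (Ln u)\<bar> < pi / 2"
    using assms Re_Ln_pos_lt_imp by auto
  then have "Ln (w * u) = Ln w + Ln u"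
    using assms by (intro Ln_times_simple) auto
  with assms show ?thesis by (auto simp: powr_def exp_add distrib_left)
qed

lemma powr_minus_add_of_nat:
  fixes L t :: complex
  assumes "L \<noteq> 0"
  shows "L powr (- (t + of_nat c)) = L powr (- t) / L ^ c"
    and "L powr (- (t - of_nat c)) = L powr (- t) * L ^ c"
proof -
  have "L powr (- (t + of_nat c)) = L powr (- t) * L powr (- of_nat c)"
    by (simp flip: powr_add)
  then show "L powr (- (t + of_nat c)) = L powr (- t) / L ^ c"
    using assms by (simp add: powr_minus powr_nat' divide_inverse)
  have "L powr (- (t - of_nat c)) = L powr (- t) * L powr (of_nat c)"
    by (simp flip: powr_add)
  then show "L powr (- (t - of_nat c)) = L powr (- t) * L ^ c"
    using assms by (simp add: powr_nat')
qed

lemma has_sum_binomial_series: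
  fixes t x :: complex
  assumes "norm x < 1"
  shows "((\<lambda>c. pochhammer t c / fact c * x ^ c) has_sum (1 - x) powr (- t)) UNIV"
proof -
  have coeff_eq: "pochhammer t c / fact c * x ^ c = ((- t) gchoose c) * (- x) ^ c" for c
  proof -
    have "((- t) gchoose c) * (- x) ^ c = ((-1) ^ c * (-1) ^ c) * (pochhammer t c / fact c * x ^ c)"
      by (simp add: gbinomial_pochhammer power_minus[of x] field_simps)
    also have "(-1::complex) ^ c * (-1) ^ c = 1" by (simp flip: power_add)
    finally show ?thesis by simp
  qed
  have "(\<lambda>c. ((- t) gchoose c) * (- x) ^ c) sums (1 + (- x)) powr (- t)"
    using assms by (intro gen_binomial_complex) simp
  moreover have "summable (\<lambda>c. norm (((- t) gchoose c) * (- x) ^ c))"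
    using assms by (intro abs_summable_in_conv_radius) (simp add: conv_radius_gchoose)
  ultimately show ?thesis
    unfolding coeff_eq by (intro norm_summable_imp_has_sum) simp_all
qed

definition restrict_pairs ::
    "(nat \<times> nat) set \<Rightarrow> (nat \<Rightarrow> nat \<Rightarrow> complex) \<Rightarrow> nat \<Rightarrow> nat \<Rightarrow> complex" where
  "restrict_pairs S z j k = (if (j,k) \<in> S then z j k else 0)"

lemma norm_sub_one_le_quarterD:
  fixes w :: complex
  assumes "norm (w - 1) \<le> 1/4"
  shows "0 < Re w" "3/4 \<le> norm w" "norm w \<le> 5/4"
  using assms abs_Re_le_cmod[of "w - 1"] norm_triangle_ineq2[of w 1]
    norm_triangle_ineq3[of w 1] norm_minus_commute[of w 1]
  by auto

lemma path_sum_zero_column: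
  assumes "r \<le> n" "\<And>j. z j r = 0"
  shows "path_sum n z r = 1"
  using assms by (cases "r = n") (simp_all add: path_sum_top path_sum_rec)

lemma norm_path_sum_sub_one_le:
  assumes z: "\<And>j k. (j,k) \<in> idx_pairs n \<Longrightarrow> norm (z j k) \<le> \<delta>"
    and \<delta>: "0 \<le> \<delta>" "real n * \<delta> \<le> 1/5" and r: "1 \<le> r" "r \<le> n"
  shows "norm (path_sum n z r - 1) \<le> 1/4"
  using r
proof (induction "n - r" arbitrary: r rule: less_induct)
  case less
  show ?case
  proof (cases "r = n")
    case False
    have "norm (z m r * path_sum n z m) \<le> \<delta> * (5/4)" if "m \<in> {r<..n}" for m
    proof -
      have "norm (path_sum n z m - 1) \<le> 1/4"
        using that less.prems by (intro less.hyps) auto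
      then have "norm (path_sum n z m) \<le> 5/4"
        using norm_triangle_ineq2[of "path_sum n z m" 1] by simp
      moreover have "norm (z m r) \<le> \<delta>"
        using that less.prems by (intro z) (auto simp: idx_pairs_def)
      ultimately show ?thesis
        unfolding norm_mult using \<delta> by (intro mult_mono) auto
    qed
    then have "norm (\<Sum>m\<in>{r<..n}. z m r * path_sum n z m) \<le> real (n - r) * (\<delta> * (5/4))"
      using sum_norm_le[of "{r<..n}" "\<lambda>m. z m r * path_sum n z m" "\<lambda>_. \<delta> * (5/4)"] by simp
    also have "\<dots> \<le> real n * (\<delta> * (5/4))"
      using \<delta> by (intro mult_right_mono) auto
    also have "\<dots> \<le> 1/4" using \<delta> by (simp add: algebra_simps)
    finally show ?thesis
      using False less.prems by (simp add: path_sum_rec norm_minus_commute)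
  qed (simp add: path_sum_top)
qed

lemma path_sum_restrict_insert:
  assumes "(m,a) \<notin> S" "a < m" "m \<le> n" and col: "\<And>j k. (j,k) \<in> S \<Longrightarrow> a \<le> k"
  shows "r \<noteq> a \<Longrightarrow>
      path_sum n (restrict_pairs (insert (m,a) S) z) r = path_sum n (restrict_pairs S z) r"
    and "path_sum n (restrict_pairs (insert (m,a) S) z) a
      = path_sum n (restrict_pairs S z) a - z m a * path_sum n (restrict_pairs S z) m"
proof -
  show other: "path_sum n (restrict_pairs (insert (m,a) S) z) r = path_sum n (restrict_pairs S z) r"
    if "r \<noteq> a" for r
  proof (cases "a < r")
    case True
    then show ?thesis by (intro path_sum_cong) (auto simp: restrict_pairs_def)
  next
    case False
    with that have "r < a" by simp
    then have "path_sum n (restrict_pairs T z) r = 1" if "T = S \<or> T = insert (m,a) S" for T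
      using that assms(2,3) col by (intro path_sum_zero_column) (force simp: restrict_pairs_def)+
    then show ?thesis by simp
  qed
  have "(\<Sum>j\<in>{a<..n}. restrict_pairs (insert (m,a) S) z j a
          * path_sum n (restrict_pairs (insert (m,a) S) z) j)
      = (\<Sum>j\<in>{a<..n}. restrict_pairs S z j a * path_sum n (restrict_pairs S z) j
           + (if j = m then z m a * path_sum n (restrict_pairs S z) m else 0))"
    by (intro sum.cong refl) (use assms(1) in \<open>auto simp: other restrict_pairs_def\<close>)
  also have "\<dots> = (\<Sum>j\<in>{a<..n}. restrict_pairs S z j a * path_sum n (restrict_pairs S z) j)
           + z m a * path_sum n (restrict_pairs S z) m"
    using assms(2,3) by (simp add: sum.distrib)
  finally show "path_sum n (restrict_pairs (insert (m,a) S) z) a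
      = path_sum n (restrict_pairs S z) a - z m a * path_sum n (restrict_pairs S z) m"
    using assms(2,3) by (simp add: path_sum_rec)
qed

lemma beta_under_eq_0_Gamma_on:
  assumes "\<beta> \<in> Gamma_on S" "\<And>j k. (j,k) \<in> S \<Longrightarrow> a \<le> k"
  shows "beta_under \<beta> a = 0"
proof -
  have "\<beta> a r = 0" if "r < a" for r
    using that assms by (intro Gamma_on_outside) force+
  then show ?thesis by (simp add: beta_under_def)
qed

lemma prod_powr_shift:
  fixes L \<tau> :: "nat \<Rightarrow> complex"
  assumes "finite I" "a \<in> I" "m \<in> I" "a \<noteq> m" "\<And>r. r \<in> I \<Longrightarrow> L r \<noteq> 0"
  shows "(\<Prod>r\<in>I. L r powr - (\<tau>(a := \<tau> a + of_nat c, m := \<tau> m - of_nat c)) r)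
      = (\<Prod>r\<in>I. L r powr - \<tau> r) * (L m / L a) ^ c"
proof -
  have "(\<Prod>r\<in>I. L r powr - (\<tau>(a := \<tau> a + of_nat c, m := \<tau> m - of_nat c)) r)
      = (\<Prod>r\<in>I. L r powr - \<tau> r * (if r = a then inverse (L a) ^ c else 1)
          * (if r = m then L m ^ c else 1))"
  proof (rule prod.cong[OF refl])
    fix r assume "r \<in> I"
    then show "L r powr - (\<tau>(a := \<tau> a + of_nat c, m := \<tau> m - of_nat c)) r
        = L r powr - \<tau> r * (if r = a then inverse (L a) ^ c else 1)
          * (if r = m then L m ^ c else 1)"
      using assms(4) powr_minus_add_of_nat[OF assms(5), of r "\<tau> r" c]
      by (auto simp: divide_inverse power_inverse)
  qed
  also have "\<dots> = (\<Prod>r\<in>I. L r powr - \<tau> r) * (L m / L a) ^ c"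
    using assms(1-4) by (simp add: prod.distrib power_mult_distrib divide_inverse mult_ac)
  finally show ?thesis .
qed

lemma has_sum_series_term_insert:
  fixes L L' :: "nat \<Rightarrow> complex"
  assumes ma: "(m,a) \<in> idx_pairs n" "(m,a) \<notin> S" and col: "\<And>j k. (j,k) \<in> S \<Longrightarrow> a \<le> k"
    and IH: "\<And>\<tau>. (series_term n \<tau> z has_sum (\<Prod>r=1..n. L r powr - \<tau> r)) (Gamma_on S)"
    and L_Re: "\<And>r. r \<in> {1..n} \<Longrightarrow> 0 < Re (L r)"
    and L'_a: "L' a = L a - z m a * L m" and L'_other: "\<And>r. r \<noteq> a \<Longrightarrow> L' r = L r"
    and x: "norm (z m a * L m / L a) < 1"
    and summable: "series_term n \<tau> z summable_on Gamma_on (insert (m,a) S)"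
  shows "(series_term n \<tau> z has_sum (\<Prod>r=1..n. L' r powr - \<tau> r)) (Gamma_on (insert (m,a) S))"
proof -
  define x where "x = z m a * L m / L a"
  define P0 where "P0 = (\<Prod>r=1..n. L r powr - \<tau> r)"
  have am: "a \<in> {1..n}" "m \<in> {1..n}" "a \<noteq> m" using ma by (auto simp: idx_pairs_def)
  have L_nz: "L r \<noteq> 0" if "r \<in> {1..n}" for r using L_Re[OF that] by auto
  have inner: "((\<lambda>\<beta>. series_term n \<tau> z (set_entry \<beta> m a c))
      has_sum P0 * (pochhammer (\<tau> a) c / fact c * x ^ c)) (Gamma_on S)" for c
  proof -
    define \<tau>' where "\<tau>' = \<tau>(a := \<tau> a + of_nat c, m := \<tau> m - of_nat c)"
    have "(\<Prod>r=1..n. L r powr - \<tau>' r) = P0 * (L m / L a) ^ c"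
      unfolding \<tau>'_def P0_def by (rule prod_powr_shift[OF finite_atLeastAtMost am L_nz])
    then have "((\<lambda>\<beta>. pochhammer (\<tau> a) c / fact c * z m a ^ c * series_term n \<tau>' z \<beta>)
        has_sum P0 * (pochhammer (\<tau> a) c / fact c * x ^ c)) (Gamma_on S)"
      using has_sum_cmult_right[OF IH[of \<tau>'], of "pochhammer (\<tau> a) c / fact c * z m a ^ c"]
      by (simp add: x_def power_divide power_mult_distrib field_simps)
    moreover have "series_term n \<tau> z (set_entry \<beta> m a c)
        = pochhammer (\<tau> a) c / fact c * z m a ^ c * series_term n \<tau>' z \<beta>" if "\<beta> \<in> Gamma_on S" for \<beta>
      unfolding \<tau>'_def using that ma col
      by (intro series_term_set_entry Gamma_on_outside beta_under_eq_0_Gamma_on)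
    ultimately show ?thesis by (subst has_sum_cong) auto
  qed
  have outer: "((\<lambda>c. P0 * (pochhammer (\<tau> a) c / fact c * x ^ c))
      has_sum P0 * (1 - x) powr - \<tau> a) UNIV"
    using x unfolding x_def[symmetric] by (intro has_sum_cmult_right has_sum_binomial_series)
  have "0 < Re (1 - x)"
    using x abs_Re_le_cmod[of x] unfolding x_def[symmetric] by simp
  moreover have "L' a = L a * (1 - x)"
    unfolding L'_a x_def using L_nz[OF am(1)] by (simp add: field_simps)
  ultimately have "L' a powr - \<tau> a = L a powr - \<tau> a * (1 - x) powr - \<tau> a"
    using L_Re[OF am(1)] by (simp add: powr_mult_Re_pos)
  then have "(\<Prod>r=1..n. L' r powr - \<tau> r)
      = (\<Prod>r=1..n. L r powr - \<tau> r * (if r = a then (1 - x) powr - \<tau> a else 1))"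
    using L'_other by (intro prod.cong) auto
  also have "\<dots> = P0 * (1 - x) powr - \<tau> a"
    using am by (simp add: P0_def prod.distrib)
  finally show ?thesis
    using has_sum_Gamma_on_insert[OF ma(2) summable inner outer] by simp
qed

section \<open>The expansion\<close>

lemma Gamma_on_mono: "S \<subseteq> T \<Longrightarrow> Gamma_on S \<subseteq> Gamma_on T"
  by (auto simp: Gamma_on_def)

lemma finite_pairs_min_snd:
  fixes A :: "('a \<times> 'b::linorder) set"
  assumes "finite A" "A \<noteq> {}"
  obtains m a where "(m,a) \<in> A" "\<And>j k. (j,k) \<in> A \<Longrightarrow> a \<le> k"
proof -
  have "Min (snd ` A) \<in> snd ` A" using assms by (intro Min_in) auto
  then obtain m where "(m, Min (snd ` A)) \<in> A" by force
  moreover have "Min (snd ` A) \<le> k" if "(j,k) \<in> A" for j k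
    using assms that by (intro Min_le) force+
  ultimately show ?thesis using that by blast
qed

lemma has_sum_series_term_Gamma_on:
  assumes S: "finite S" "S \<subseteq> idx_pairs n"
    and z: "\<And>j k. (j,k) \<in> idx_pairs n \<Longrightarrow> norm (z j k) \<le> \<delta>" and \<delta>: "0 \<le> \<delta>" "real n * \<delta> \<le> 1/5"
    and summable: "\<And>\<tau>. series_term n \<tau> z summable_on Gamma_A n"
  shows "(series_term n \<tau> z has_sum (\<Prod>r=1..n. path_sum n (restrict_pairs S z) r powr - \<tau> r))
           (Gamma_on S)"
  using S
proof (induction S arbitrary: \<tau> rule: finite_remove_induct)
  case empty
  have "series_term n \<tau> z (\<lambda>j k. 0) = 1"
    by (simp add: series_term_def beta_under_def beta_over_def beta_fact_def z_pow_def)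
  then have "(series_term n \<tau> z has_sum 1) (Gamma_on {})"
    using has_sum_finite[of "{\<lambda>j k. 0}" "series_term n \<tau> z"] by (simp add: Gamma_on_empty)
  moreover have "path_sum n (restrict_pairs {} z) r = 1" if "r \<in> {1..n}" for r
    using that by (intro path_sum_zero_column) (auto simp: restrict_pairs_def)
  ultimately show ?case by (subst prod.neutral) auto
next
  case (remove A)
  \<comment> \<open>With its column minimal, removing (m,a) leaves row a empty in every array on the rest.\<close>
  obtain m a where ma: "(m,a) \<in> A" and col: "\<And>j k. (j,k) \<in> A \<Longrightarrow> a \<le> k"
    using finite_pairs_min_snd[OF remove.hyps(1,2)] by blast
  define S where "S = A - {(m,a)}"
  have A: "A = insert (m,a) S" "(m,a) \<notin> S" using ma by (auto simp: S_def)
  have ma_idx: "(m,a) \<in> idx_pairs n" using ma remove.prems by auto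
  then have am: "1 \<le> a" "a < m" "m \<le> n" by (auto simp: idx_pairs_def)
  define L where "L = path_sum n (restrict_pairs S z)"
  have L_near: "norm (L r - 1) \<le> 1/4" if "r \<in> {1..n}" for r
    unfolding L_def using that z \<delta>
    by (intro norm_path_sum_sub_one_le) (auto simp: restrict_pairs_def)
  note L_bounds = norm_sub_one_le_quarterD[OF L_near]
  have "norm (z m a * L m / L a) \<le> \<delta> * (5/4) / (3/4)"
    unfolding norm_mult norm_divide using z[OF ma_idx] \<delta>(1) am L_bounds(2,3)
    by (intro frac_le mult_mono) auto
  also have "\<dots> < 1"
  proof -
    have "2 * \<delta> \<le> real n * \<delta>" using \<delta>(1) am by (intro mult_right_mono) auto
    with \<delta>(2) show ?thesis by simp
  qed
  finally have x: "norm (z m a * L m / L a) < 1" .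
  have IH: "(series_term n \<tau>' z has_sum (\<Prod>r=1..n. L r powr - \<tau>' r)) (Gamma_on S)" for \<tau>'
    using remove.IH[OF ma] remove.prems unfolding L_def S_def by auto
  have "series_term n \<tau> z summable_on Gamma_on A"
    by (rule summable_on_subset_banach[OF summable])
       (use remove.prems in \<open>auto simp: Gamma_A_eq intro!: Gamma_on_mono\<close>)
  moreover have col_S: "\<And>j k. (j,k) \<in> S \<Longrightarrow> a \<le> k" using col A by auto
  note peel = path_sum_restrict_insert[OF A(2) am(2,3) col_S, where z = z, folded L_def]
  ultimately show ?case
    unfolding A(1)
    by (intro has_sum_series_term_insert[OF ma_idx A(2) col_S IH L_bounds(1) peel(2) peel(1) x])
qed

lemma prod_atLeast1_drop_last:
  fixes f :: "nat \<Rightarrow> 'a::comm_monoid_mult"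
  assumes "f n = 1"
  shows "(\<Prod>s=1..n. f s) = (\<Prod>s=1..n-1. f s)"
  using assms by (cases n) (simp_all add: prod.cl_ivl_Suc)

lemma series_term_eq:
  "series_term n \<tau> z = (\<lambda>\<beta>.
      (\<Prod>s=1..n-1. pochhammer (\<tau> s - of_nat (beta_under \<beta> s)) (beta_over n \<beta> s))
        / of_nat (beta_fact n \<beta>) * z_pow n z \<beta>)"
  unfolding series_term_def by (subst prod_atLeast1_drop_last) (simp_all add: beta_over_def)

lemma prod_path_sum_restrict_idx_pairs:
  "(\<Prod>r=1..n. path_sum n (restrict_pairs (idx_pairs n) z) r powr - \<tau> r)
      = (\<Prod>r=1..n-1. (\<Sum>s=r..n. path_poly z r s) powr (- \<tau> r))"
proof -
  have "path_sum n (restrict_pairs (idx_pairs n) z) r = path_sum n z r" if "r \<in> {1..n}" for r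
    using that by (intro path_sum_cong) (auto simp: restrict_pairs_def idx_pairs_def)
  then have "(\<Prod>r=1..n. path_sum n (restrict_pairs (idx_pairs n) z) r powr - \<tau> r)
      = (\<Prod>r=1..n. path_sum n z r powr - \<tau> r)"
    by (intro prod.cong) auto
  also have "\<dots> = (\<Prod>r=1..n-1. path_sum n z r powr - \<tau> r)"
    by (rule prod_atLeast1_drop_last) (simp add: path_sum_top)
  finally show ?thesis by (simp add: path_sum_def)
qed

lemma has_sum_series_term:
  assumes z: "\<And>j k. (j,k) \<in> idx_pairs n \<Longrightarrow> norm (z j k) \<le> 1 / 2 ^ (n + 4)"
  shows "(series_term n \<tau> z has_sum (\<Prod>r=1..n-1. (\<Sum>s=r..n. path_poly z r s) powr (- \<tau> r)))
           (Gamma_A n)"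
proof -
  define \<delta> :: real where "\<delta> = 1 / 2 ^ (n + 4)"
  have "real n * \<delta> \<le> 2 ^ n * \<delta>"
    by (intro mult_right_mono less_imp_le of_nat_less_two_power) (simp add: \<delta>_def)
  also have "\<dots> \<le> 1/5" by (simp add: \<delta>_def power_add)
  finally have n_\<delta>: "real n * \<delta> \<le> 1/5" .
  have \<delta>_geometric: "2 ^ (n + 2) * \<delta> < 1" by (simp add: \<delta>_def power_add)
  have z_\<delta>: "\<And>j k. (j,k) \<in> idx_pairs n \<Longrightarrow> norm (z j k) \<le> \<delta>"
    using z by (simp add: \<delta>_def)
  have "(series_term n \<tau> z has_sum
      (\<Prod>r=1..n. path_sum n (restrict_pairs (idx_pairs n) z) r powr - \<tau> r)) (Gamma_on (idx_pairs n))"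
    using has_sum_series_term_Gamma_on[OF finite_idx_pairs order_refl z_\<delta> _ n_\<delta>
          summable_on_series_term[OF z_\<delta> \<delta>_geometric]]
    by (simp add: \<delta>_def)
  then show ?thesis by (simp only: Gamma_A_eq prod_path_sum_restrict_idx_pairs)
qed

theorem mainTheorem6:
  fixes n :: nat and \<tau> :: "nat \<Rightarrow> complex"
  shows "\<exists>\<epsilon>>0. \<forall>z :: nat \<Rightarrow> nat \<Rightarrow> complex.
     (\<forall>j k. (j,k) \<in> idx_pairs n \<longrightarrow> norm (z j k) < \<epsilon>) \<longrightarrow>
     ((\<lambda>\<beta>. (\<Prod>s=1..n-1. pochhammer (\<tau> s - of_nat (beta_under \<beta> s)) (beta_over n \<beta> s))
             / of_nat (beta_fact n \<beta>) * z_pow n z \<beta>)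
        has_sum (\<Prod>r=1..n-1. (\<Sum>s=r..n. path_poly z r s) powr (- \<tau> r))) (Gamma_A n)"
proof (intro exI[of _ "1 / 2 ^ (n + 4)"] conjI allI impI)
  fix z :: "nat \<Rightarrow> nat \<Rightarrow> complex"
  assume "\<forall>j k. (j,k) \<in> idx_pairs n \<longrightarrow> norm (z j k) < 1 / 2 ^ (n + 4)"
  then have "(series_term n \<tau> z has_sum (\<Prod>r=1..n-1. (\<Sum>s=r..n. path_poly z r s) powr (- \<tau> r)))
      (Gamma_A n)"
    by (intro has_sum_series_term) (simp add: less_imp_le)
  then show "((\<lambda>\<beta>. (\<Prod>s=1..n-1. pochhammer (\<tau> s - of_nat (beta_under \<beta> s)) (beta_over n \<beta> s))
             / of_nat (beta_fact n \<beta>) * z_pow n z \<beta>)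
        has_sum (\<Prod>r=1..n-1. (\<Sum>s=r..n. path_poly z r s) powr (- \<tau> r))) (Gamma_A n)"
    by (simp only: series_term_eq)
qed simp

end
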